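(* Let $X^n$ be a sequence of processes converging locally to a process $X$ in the Skorokhod topology under a continuous test function $f:\cdot\to[0,\infty]$, and assume that $X$ has continuous paths and does not have finite-time explosion. Then for any $r,t>0$, $$\limsup_{n}\mathbb P\big(\tau_r^{(n)}\le t\big)\le \mathbb P(\tau_r\le t),$$ and consequently $\lim_{r\to\infty}\limsup_n\mathbb P(\tau_r^{(n)}\le t)=0$.
   Context: For $r>0$ set $\tau_r^{(n)}=\inf\{t\ge0: f(X^n_t)\ge r\}$ and $\tau_r=\inf\{t\ge0: f(X_t)\ge r\}$. "$X^n$ converges locally to $X$ in the Skorokhod topology under $f$" means: for every $r>0$, the stopped processes satisfy $X^n_{t\wedge\tau^{(n)}_r}\Rightarrow X_{t\wedge\tau_r}$ in distribution in the Skorokhod topology. $X$ "does not have finite-time explosion" means $\mathbb P(\lim_{r\to\infty}\tau_r=\infty)=1$. *)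

theory Defs
  imports "HOL-Probability.Probability"
begin

text \<open>Paths are functions real => 'e; only times t >= 0 are relevant.\<close>

definition cadlag :: "(real \<Rightarrow> 'e::metric_space) \<Rightarrow> bool" where
  "cadlag x \<longleftrightarrow> (\<forall>t\<ge>0. continuous (at_right t) x \<and> (t > 0 \<longrightarrow> (\<exists>l. (x \<longlongrightarrow> l) (at_left t))))"

text \<open>Convergence in the Skorokhod J1 topology on D_E[0,infinity)
  (Ethier--Kurtz, Prop. 3.5.3): there are strictly increasing continuous
  bijections lambda_n of [0,infinity) such that for each T > 0,
  sup_{t <= T} |lambda_n t - t| -> 0 and sup_{t <= T} d(x_n t, x(lambda_n t)) -> 0.\<close>

definition time_change :: "(real \<Rightarrow> real) \<Rightarrow> bool" where
  "time_change l \<longleftrightarrow> strict_mono_on {0..} l \<and> continuous_on {0..} l \<and> l ` {0..} = {0..}"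

definition skorokhod_conv :: "(nat \<Rightarrow> real \<Rightarrow> 'e::metric_space) \<Rightarrow> (real \<Rightarrow> 'e) \<Rightarrow> bool" where
  "skorokhod_conv xs x \<longleftrightarrow>
     (\<exists>l :: nat \<Rightarrow> real \<Rightarrow> real. (\<forall>n. time_change (l n)) \<and>
        (\<forall>T>0. \<forall>e>0. eventually (\<lambda>n. \<forall>t\<in>{0..T}. \<bar>l n t - t\<bar> < e
                                       \<and> dist (xs n t) (x (l n t)) < e) sequentially))"

text \<open>Continuity w.r.t. the (metrizable) Skorokhod topology, as sequential continuity on D_E[0,infinity).\<close>
definition skorokhod_continuous :: "((real \<Rightarrow> 'e::metric_space) \<Rightarrow> real) \<Rightarrow> bool" where
  "skorokhod_continuous g \<longleftrightarrow>
     (\<forall>xs x. (\<forall>n. cadlag (xs n)) \<and> cadlag x \<and> skorokhod_conv xs x \<longrightarrow> (\<lambda>n. g (xs n)) \<longlonglongrightarrow> g x)"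

definition skorokhod_conv_distr ::
  "(nat \<Rightarrow> 'a measure) \<Rightarrow> (nat \<Rightarrow> 'a \<Rightarrow> real \<Rightarrow> 'e::metric_space) \<Rightarrow> 'b measure \<Rightarrow> ('b \<Rightarrow> real \<Rightarrow> 'e) \<Rightarrow> bool" where
  "skorokhod_conv_distr M Xs N Y \<longleftrightarrow>
     (\<forall>g. skorokhod_continuous g \<and> bounded (range g) \<longrightarrow>
        (\<lambda>n. \<integral>\<omega>. g (Xs n \<omega>) \<partial>M n) \<longlonglongrightarrow> (\<integral>\<omega>. g (Y \<omega>) \<partial>N))"

text \<open>tau_r = inf{t >= 0 : f(x t) >= r}, with inf {} = infinity.\<close>
definition hit_time :: "('e \<Rightarrow> ennreal) \<Rightarrow> real \<Rightarrow> (real \<Rightarrow> 'e) \<Rightarrow> ennreal" where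
  "hit_time f r x = (INF t\<in>{t. t \<ge> 0 \<and> ennreal r \<le> f (x t)}. ennreal t)"

definition stopped :: "('e \<Rightarrow> ennreal) \<Rightarrow> real \<Rightarrow> (real \<Rightarrow> 'e) \<Rightarrow> real \<Rightarrow> 'e" where
  "stopped f r x t = x (if hit_time f r x < ennreal t then enn2real (hit_time f r x) else t)"

end

theory Submission
  imports Defs
begin

(* For a continuous path x the event tau_r(x) <= t is the decreasing limit, as e goes to 0, of
   the events G_e(x) > 0, where G_e(x) = sup_{s >= 0} psi_e(s) h_e(x s) is built from continuous
   ramps: psi_e falls from 1 on (-inf, t] to 0 on [t + e, inf), and h_e rises from 0 where
   f <= r - e to 1 where f >= r. Each G_e takes values in [0,1], equals 1 when tau_r <= t, is
   unchanged by stopping the path at tau_r, and is continuous in the Skorokhod topology (the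
   upper bound near a cadlag limit path comes from compactness of [0, t + e], the lower bound from
   the time changes). Weak convergence of the stopped processes therefore gives
   limsup_n P(tau_r^n <= t) <= E G_e(X) <= P(G_e(X) > 0), and letting e go to 0 yields the first
   claim. Without explosion P(tau_r <= t) decreases to 0 as r grows, which gives the second. *)

lemma continuous_on_imp_continuous_at_right:
  fixes x :: "real \<Rightarrow> 'e::topological_space"
  assumes "continuous_on {0..} x" "s \<ge> 0"
  shows "continuous (at_right s) x"
proof -
  have "continuous (at s within {0..}) x"
    using assms by (simp add: continuous_on_eq_continuous_within)
  then show ?thesis by (rule continuous_within_subset) (use assms(2) in auto)
qed

lemma hit_time_le:
  assumes "s \<ge> 0" "ennreal r \<le> f (x s)"
  shows "hit_time f r x \<le> ennreal s"
  unfolding hit_time_def by (rule INF_lower) (use assms in auto)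

lemma hit_time_mono:
  assumes "r \<le> r'"
  shows "hit_time f r x \<le> hit_time f r' x"
  unfolding hit_time_def
  by (rule INF_superset_mono) (auto intro: order_trans[OF ennreal_leI[OF assms]])

lemma hit_time_attained:
  fixes x :: "real \<Rightarrow> 'e::metric_space"
  assumes rc: "\<forall>s\<ge>0. continuous (at_right s) x" and contf: "continuous_on UNIV f"
    and fin: "hit_time f r x < \<infinity>"
  shows "ennreal r \<le> f (x (enn2real (hit_time f r x)))"
proof (rule ccontr)
  define \<sigma> where "\<sigma> = enn2real (hit_time f r x)"
  have \<sigma>: "\<sigma> \<ge> 0" "hit_time f r x = ennreal \<sigma>" using fin by (auto simp: \<sigma>_def less_top)
  assume "\<not> ennreal r \<le> f (x (enn2real (hit_time f r x)))"
  then have below: "f (x \<sigma>) < ennreal r" by (simp add: \<sigma>_def)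
  have "((\<lambda>s. f (x s)) \<longlongrightarrow> f (x \<sigma>)) (at_right \<sigma>)"
    using rc \<sigma>(1) contf unfolding continuous_within
    by (intro isCont_tendsto_compose[of _ f]) (auto simp: continuous_on_eq_continuous_at)
  then have "eventually (\<lambda>s. f (x s) < ennreal r) (at_right \<sigma>)"
    using below by (rule order_tendstoD)
  then obtain b where b: "b > \<sigma>" "\<And>s. \<sigma> < s \<Longrightarrow> s < b \<Longrightarrow> f (x s) < ennreal r"
    unfolding eventually_at_right_field by auto
  have "ennreal b \<le> hit_time f r x"
    unfolding hit_time_def
  proof (rule INF_greatest)
    fix s assume s: "s \<in> {t. t \<ge> 0 \<and> ennreal r \<le> f (x t)}"
    then have "ennreal \<sigma> \<le> ennreal s" using hit_time_le[of s r f x] \<sigma>(2) by simp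
    then have "\<sigma> \<le> s" using s by (simp add: ennreal_le_iff)
    moreover have "s \<noteq> \<sigma>" using s below by auto
    ultimately have "\<sigma> < s" by simp
    then have "\<not> s < b" using b(2) s by (auto simp: not_less[symmetric])
    then show "ennreal b \<le> ennreal s" by (simp add: ennreal_leI)
  qed
  then have "ennreal b \<le> ennreal \<sigma>" by (simp only: \<sigma>(2))
  then have "b \<le> \<sigma>" using ennreal_le_iff[OF \<sigma>(1)] by blast
  then show False using b(1) by simp
qed

lemma hit_time_le_iff:
  fixes x :: "real \<Rightarrow> 'e::metric_space"
  assumes "\<forall>s\<ge>0. continuous (at_right s) x" "continuous_on UNIV f" "t \<ge> 0"
  shows "hit_time f r x \<le> ennreal t \<longleftrightarrow> (\<exists>s\<in>{0..t}. ennreal r \<le> f (x s))"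
proof
  assume le: "hit_time f r x \<le> ennreal t"
  have fin: "hit_time f r x < \<infinity>"
    unfolding infinity_ennreal_def using le ennreal_less_top[of t] by (rule le_less_trans)
  define \<sigma> where "\<sigma> = enn2real (hit_time f r x)"
  have "hit_time f r x = ennreal \<sigma>"
    unfolding \<sigma>_def using fin by (simp add: infinity_ennreal_def)
  then have "\<sigma> \<le> t" using le ennreal_le_iff[OF assms(3)] by simp
  moreover have "ennreal r \<le> f (x \<sigma>)"
    unfolding \<sigma>_def by (rule hit_time_attained[OF assms(1,2) fin])
  ultimately show "\<exists>s\<in>{0..t}. ennreal r \<le> f (x s)" by (auto simp: \<sigma>_def)
next
  assume "\<exists>s\<in>{0..t}. ennreal r \<le> f (x s)"
  then obtain s where "s \<in> {0..t}" "ennreal r \<le> f (x s)" by blast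
  then have "hit_time f r x \<le> ennreal s" by (intro hit_time_le) auto
  also have "\<dots> \<le> ennreal t" using \<open>s \<in> {0..t}\<close> by (intro ennreal_leI) auto
  finally show "hit_time f r x \<le> ennreal t" .
qed

lemma stopped_eq_min:
  assumes "hit_time f r x = ennreal \<sigma>" "\<sigma> \<ge> 0"
  shows "stopped f r x s = x (min s \<sigma>)"
proof -
  have "hit_time f r x < ennreal s \<longleftrightarrow> \<sigma> < s"
    using assms by (cases "s \<ge> 0") (auto simp: ennreal_less_iff ennreal_neg)
  then show ?thesis using assms by (auto simp: stopped_def min_def)
qed

lemma stopped_never_hit: "hit_time f r x = \<infinity> \<Longrightarrow> stopped f r x = x"
  by (simp add: stopped_def fun_eq_iff)

definition path_sup :: "(real \<Rightarrow> real) \<Rightarrow> ('e \<Rightarrow> real) \<Rightarrow> (real \<Rightarrow> 'e) \<Rightarrow> real" where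
  "path_sup \<psi> h x = (SUP s\<in>{0..}. \<psi> s * h (x s))"

lemma path_sup_least:
  assumes "\<And>s. s \<ge> 0 \<Longrightarrow> \<psi> s * h (x s) \<le> B"
  shows "path_sup \<psi> h x \<le> B"
  unfolding path_sup_def by (rule cSUP_least) (use assms in auto)

locale weight_pair =
  fixes \<psi> :: "real \<Rightarrow> real" and h :: "'e::metric_space \<Rightarrow> real" and T :: real
  assumes continuous_\<psi>: "continuous_on UNIV \<psi>" and continuous_h: "continuous_on UNIV h"
    and \<psi>_bounds: "\<And>s. 0 \<le> \<psi> s \<and> \<psi> s \<le> 1" and h_bounds: "\<And>y. 0 \<le> h y \<and> h y \<le> 1"
    and \<psi>_vanishes: "\<And>s. s \<ge> T \<Longrightarrow> \<psi> s = 0" and T_nonneg: "T \<ge> 0"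
begin

lemma weight_bounds: "0 \<le> \<psi> s * h y" "\<psi> s * h y \<le> 1"
  using \<psi>_bounds[of s] h_bounds[of y] by (auto simp: mult_le_one)

lemma bdd_above_weights: "bdd_above ((\<lambda>s. \<psi> s * h (x s)) ` A)"
  using weight_bounds by (intro bdd_aboveI[of _ 1]) auto

lemma path_sup_upper: "s \<ge> 0 \<Longrightarrow> \<psi> s * h (x s) \<le> path_sup \<psi> h x"
  unfolding path_sup_def by (rule cSUP_upper[OF _ bdd_above_weights]) auto

lemma path_sup_nonneg: "0 \<le> path_sup \<psi> h x"
  using weight_bounds(1) path_sup_upper[of 0 x] by (rule order_trans) simp

lemma path_sup_le_one: "path_sup \<psi> h x \<le> 1"
  using weight_bounds(2) by (rule path_sup_least)

lemma path_sup_pos_iff: "0 < path_sup \<psi> h x \<longleftrightarrow> (\<exists>s\<ge>0. 0 < \<psi> s \<and> 0 < h (x s))"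
proof
  assume "0 < path_sup \<psi> h x"
  then obtain s where "s \<ge> 0" "0 < \<psi> s * h (x s)"
    unfolding path_sup_def using less_cSUP_iff[OF _ bdd_above_weights] by fastforce
  then show "\<exists>s\<ge>0. 0 < \<psi> s \<and> 0 < h (x s)"
    using \<psi>_bounds[of s] h_bounds[of "x s"] by (metis less_eq_real_def mult_eq_0_iff)
next
  assume "\<exists>s\<ge>0. 0 < \<psi> s \<and> 0 < h (x s)"
  then show "0 < path_sup \<psi> h x" using path_sup_upper by (meson less_le_trans mult_pos_pos)
qed

lemma weight_near:
  assumes "e > 0"
  obtains d where "d > 0"
    "\<And>s y. \<bar>s - s0\<bar> < d \<Longrightarrow> dist y y0 < d \<Longrightarrow> \<bar>\<psi> s * h y - \<psi> s0 * h y0\<bar> < e"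
proof -
  have "isCont \<psi> s0" "isCont h y0"
    using continuous_\<psi> continuous_h by (simp_all add: continuous_on_eq_continuous_at)
  then have "isCont (\<lambda>p. \<psi> (fst p) * h (snd p)) (s0, y0)"
    using isCont_o2[of "(s0, y0)" fst \<psi>] isCont_o2[of "(s0, y0)" snd h]
    by (auto intro!: continuous_intros)
  then obtain d where d: "d > 0"
    "\<And>p. dist p (s0, y0) < d \<Longrightarrow> dist (\<psi> (fst p) * h (snd p)) (\<psi> s0 * h y0) < e"
    using assms unfolding continuous_at_eps_delta by fastforce
  show thesis
  proof (rule that[of "d / 2"])
    fix s y assume "\<bar>s - s0\<bar> < d / 2" "dist y y0 < d / 2"
    then have "dist (s, y) (s0, y0) < d"
      using sqrt_sum_squares_le_sum[of "dist s s0" "dist y y0"]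
      by (simp add: dist_Pair_Pair dist_real_def)
    then show "\<bar>\<psi> s * h y - \<psi> s0 * h y0\<bar> < e" using d(2) by (fastforce simp: dist_real_def)
  qed (use d in simp)
qed

lemma path_sup_bound_near:
  assumes "\<psi> s0 * h z \<le> path_sup \<psi> h x" "e > 0"
  obtains \<rho> where "\<rho> > 0"
    "\<And>s y. \<bar>s - s0\<bar> < \<rho> \<Longrightarrow> dist y z < \<rho> \<Longrightarrow> \<psi> s * h y < path_sup \<psi> h x + e"
proof -
  obtain \<rho> where "\<rho> > 0"
    "\<And>s y. \<bar>s - s0\<bar> < \<rho> \<Longrightarrow> dist y z < \<rho> \<Longrightarrow> \<bar>\<psi> s * h y - \<psi> s0 * h z\<bar> < e"
    using weight_near[OF assms(2)] by blast
  then show thesis using assms(1) by (intro that[of \<rho>]) fastforce+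
qed

lemma path_sup_bound_right:
  assumes "continuous (at_right s0) x" "s0 \<ge> 0" "e > 0"
  obtains d where "d > 0" "\<And>s u y. \<bar>s - s0\<bar> < d \<Longrightarrow> s0 \<le> u \<Longrightarrow> u < s0 + d \<Longrightarrow> dist y (x u) < d
      \<Longrightarrow> \<psi> s * h y < path_sup \<psi> h x + e"
proof -
  obtain \<rho> where \<rho>: "\<rho> > 0"
    "\<And>s y. \<bar>s - s0\<bar> < \<rho> \<Longrightarrow> dist y (x s0) < \<rho> \<Longrightarrow> \<psi> s * h y < path_sup \<psi> h x + e"
    using path_sup_bound_near[OF path_sup_upper[OF assms(2)] assms(3)] by blast
  have "eventually (\<lambda>u. dist (x u) (x s0) < \<rho> / 2) (at_right s0)"
    using assms(1) \<rho>(1) unfolding continuous_within by (intro tendstoD) auto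
  then obtain b where b: "b > s0" "\<And>u. s0 < u \<Longrightarrow> u < b \<Longrightarrow> dist (x u) (x s0) < \<rho> / 2"
    unfolding eventually_at_right_field by auto
  show thesis
  proof (rule that[of "min (\<rho> / 2) (b - s0)"])
    fix s u y
    assume su: "\<bar>s - s0\<bar> < min (\<rho> / 2) (b - s0)" "s0 \<le> u" "u < s0 + min (\<rho> / 2) (b - s0)"
      and y: "dist y (x u) < min (\<rho> / 2) (b - s0)"
    have "dist (x u) (x s0) < \<rho> / 2" using b su \<rho>(1) by (cases "u = s0") auto
    then have "dist y (x s0) < \<rho>" using y dist_triangle[of y "x s0" "x u"] by linarith
    moreover have "\<bar>s - s0\<bar> < \<rho>" using su(1) \<rho>(1) by auto
    ultimately show "\<psi> s * h y < path_sup \<psi> h x + e" using \<rho>(2) by blast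
  qed (use \<rho> b in simp)
qed

lemma weight_at_left_limit_le:
  assumes "(x \<longlongrightarrow> L) (at_left s0)" "s0 > 0"
  shows "\<psi> s0 * h L \<le> path_sup \<psi> h x"
proof (rule tendsto_upperbound)
  have "isCont \<psi> s0" "isCont h L"
    using continuous_\<psi> continuous_h by (simp_all add: continuous_on_eq_continuous_at)
  then show "((\<lambda>u. \<psi> u * h (x u)) \<longlongrightarrow> \<psi> s0 * h L) (at_left s0)"
    using assms(1) by (intro tendsto_mult isCont_tendsto_compose[of _ h] isCont_tendsto_compose[of _ \<psi>]
      tendsto_ident_at)
  have "eventually (\<lambda>u. 0 < u) (at_left s0)"
    using assms(2) unfolding eventually_at_left_field by (intro exI[of _ 0]) auto
  then show "eventually (\<lambda>u. \<psi> u * h (x u) \<le> path_sup \<psi> h x) (at_left s0)"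
    by eventually_elim (simp add: path_sup_upper)
qed (simp add: trivial_limit_at_left_real)

lemma path_sup_bound_left:
  assumes "(x \<longlongrightarrow> L) (at_left s0)" "s0 > 0" "e > 0"
  obtains d where "d > 0" "\<And>s u y. \<bar>s - s0\<bar> < d \<Longrightarrow> s0 - d < u \<Longrightarrow> u < s0 \<Longrightarrow> dist y (x u) < d
      \<Longrightarrow> \<psi> s * h y < path_sup \<psi> h x + e"
proof -
  obtain \<rho> where \<rho>: "\<rho> > 0"
    "\<And>s y. \<bar>s - s0\<bar> < \<rho> \<Longrightarrow> dist y L < \<rho> \<Longrightarrow> \<psi> s * h y < path_sup \<psi> h x + e"
    using path_sup_bound_near[OF weight_at_left_limit_le[OF assms(1,2)] assms(3)] by blast
  have "eventually (\<lambda>u. dist (x u) L < \<rho> / 2) (at_left s0)"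
    using assms(1) \<rho>(1) by (intro tendstoD) auto
  then obtain a where a: "a < s0" "\<And>u. a < u \<Longrightarrow> u < s0 \<Longrightarrow> dist (x u) L < \<rho> / 2"
    unfolding eventually_at_left_field by auto
  show thesis
  proof (rule that[of "min (\<rho> / 2) (s0 - a)"])
    fix s u y
    assume su: "\<bar>s - s0\<bar> < min (\<rho> / 2) (s0 - a)" "s0 - min (\<rho> / 2) (s0 - a) < u" "u < s0"
      and y: "dist y (x u) < min (\<rho> / 2) (s0 - a)"
    have "dist (x u) L < \<rho> / 2" using a su by auto
    then have "dist y L < \<rho>" using y dist_triangle[of y L "x u"] by linarith
    moreover have "\<bar>s - s0\<bar> < \<rho>" using su(1) \<rho>(1) by auto
    ultimately show "\<psi> s * h y < path_sup \<psi> h x + e" using \<rho>(2) by blast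
  qed (use \<rho> a in simp)
qed

lemma path_sup_bound_local:
  assumes "cadlag x" "s0 \<ge> 0" "e > 0"
  obtains d where "d > 0" "\<And>s u y. \<bar>s - s0\<bar> < d \<Longrightarrow> u \<ge> 0 \<Longrightarrow> \<bar>u - s0\<bar> < d \<Longrightarrow> dist y (x u) < d
      \<Longrightarrow> \<psi> s * h y < path_sup \<psi> h x + e"
proof -
  have "continuous (at_right s0) x" using assms(1,2) unfolding cadlag_def by blast
  then obtain dR where dR: "dR > 0" "\<And>s u y. \<bar>s - s0\<bar> < dR \<Longrightarrow> s0 \<le> u \<Longrightarrow> u < s0 + dR
      \<Longrightarrow> dist y (x u) < dR \<Longrightarrow> \<psi> s * h y < path_sup \<psi> h x + e"
    using path_sup_bound_right assms(2,3) by blast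
  obtain dL where dL: "dL > 0" "\<And>s u y. \<bar>s - s0\<bar> < dL \<Longrightarrow> 0 \<le> u \<Longrightarrow> s0 - dL < u \<Longrightarrow> u < s0
      \<Longrightarrow> dist y (x u) < dL \<Longrightarrow> \<psi> s * h y < path_sup \<psi> h x + e"
  proof (cases "s0 = 0")
    case True
    then show thesis by (intro that[of 1]) auto
  next
    case False
    then obtain L where "(x \<longlongrightarrow> L) (at_left s0)" "s0 > 0"
      using assms(1,2) unfolding cadlag_def by auto
    then obtain d where "d > 0" "\<And>s u y. \<bar>s - s0\<bar> < d \<Longrightarrow> s0 - d < u \<Longrightarrow> u < s0
        \<Longrightarrow> dist y (x u) < d \<Longrightarrow> \<psi> s * h y < path_sup \<psi> h x + e"
      using path_sup_bound_left assms(3) by blast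
    then show thesis by (intro that[of d]) auto
  qed
  show thesis
  proof (rule that[of "min dR dL"])
    fix s u y
    assume "\<bar>s - s0\<bar> < min dR dL" "u \<ge> 0" "\<bar>u - s0\<bar> < min dR dL" "dist y (x u) < min dR dL"
    then show "\<psi> s * h y < path_sup \<psi> h x + e"
      using dR(2)[of s u y] dL(2)[of s u y] by (cases "s0 \<le> u") auto
  qed (use dR dL in simp)
qed

lemma path_sup_bound_uniform:
  assumes "cadlag x" "e > 0"
  obtains d where "d > 0" "\<And>s u y. s \<in> {0..T} \<Longrightarrow> u \<ge> 0 \<Longrightarrow> \<bar>u - s\<bar> < d \<Longrightarrow> dist y (x u) < d
      \<Longrightarrow> \<psi> s * h y < path_sup \<psi> h x + e"
proof -
  define good_radius where "good_radius s0 d \<longleftrightarrow> d > 0 \<and> (\<forall>s u y. \<bar>s - s0\<bar> < d \<longrightarrow> u \<ge> 0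
      \<longrightarrow> \<bar>u - s0\<bar> < d \<longrightarrow> dist y (x u) < d \<longrightarrow> \<psi> s * h y < path_sup \<psi> h x + e)" for s0 d
  have "\<exists>d. good_radius s0 d" if "s0 \<in> {0..T}" for s0
  proof -
    have "s0 \<ge> 0" using that by simp
    obtain d where "d > 0" "\<And>s u y. \<bar>s - s0\<bar> < d \<Longrightarrow> u \<ge> 0 \<Longrightarrow> \<bar>u - s0\<bar> < d
        \<Longrightarrow> dist y (x u) < d \<Longrightarrow> \<psi> s * h y < path_sup \<psi> h x + e"
      using path_sup_bound_local[OF assms(1) \<open>s0 \<ge> 0\<close> assms(2)] by blast
    then show ?thesis unfolding good_radius_def by blast
  qed
  then obtain D where D: "\<And>s0. s0 \<in> {0..T} \<Longrightarrow> good_radius s0 (D s0)" by metis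
  have cover: "{0..T} \<subseteq> \<Union>((\<lambda>c. ball c (D c)) ` {0..T})"
  proof
    fix s assume s: "s \<in> {0..T}"
    then have "s \<in> ball s (D s)" using D unfolding good_radius_def by simp
    then show "s \<in> \<Union>((\<lambda>c. ball c (D c)) ` {0..T})" using s by blast
  qed
  have "\<And>G. G \<in> (\<lambda>c. ball c (D c)) ` {0..T} \<Longrightarrow> open G" by auto
  then obtain \<epsilon> where \<epsilon>: "\<epsilon> > 0"
    "\<And>s. s \<in> {0..T} \<Longrightarrow> \<exists>G\<in>(\<lambda>c. ball c (D c)) ` {0..T}. ball s \<epsilon> \<subseteq> G"
    using Heine_Borel_lemma[OF compact_Icc cover] by blast
  show thesis
  proof (rule that[OF \<epsilon>(1)])
    fix s u y assume s: "s \<in> {0..T}" and u: "u \<ge> 0" "\<bar>u - s\<bar> < \<epsilon>" "dist y (x u) < \<epsilon>"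
    obtain c where c: "c \<in> {0..T}" "ball s \<epsilon> \<subseteq> ball c (D c)" using \<epsilon>(2)[OF s] by auto
    then have "dist s c + \<epsilon> \<le> D c" using \<epsilon>(1) by (simp add: ball_subset_ball_iff)
    then have "\<bar>s - c\<bar> < D c" "\<bar>u - c\<bar> < D c" "dist y (x u) < D c"
      using u \<epsilon>(1) by (auto simp: dist_real_def)
    then show "\<psi> s * h y < path_sup \<psi> h x + e" using D[OF c(1)] u(1) unfolding good_radius_def by blast
  qed
qed

end

lemma skorokhod_convE:
  assumes "skorokhod_conv xs x" "T > 0" "d > 0"
  obtains l where "\<And>n. time_change (l n)"
    "eventually (\<lambda>n. \<forall>t\<in>{0..T}. \<bar>l n t - t\<bar> < d \<and> dist (xs n t) (x (l n t)) < d) sequentially"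
  using assms unfolding skorokhod_conv_def by blast

context weight_pair
begin

lemma path_sup_eventually_less:
  assumes x: "cadlag x" and conv: "skorokhod_conv xs x" and a: "path_sup \<psi> h x < a"
  shows "eventually (\<lambda>n. path_sup \<psi> h (xs n) < a) sequentially"
proof -
  define e where "e = (a - path_sup \<psi> h x) / 2"
  have e: "e > 0" "path_sup \<psi> h x + e < a" using a by (simp_all add: e_def field_simps)
  obtain d where d: "d > 0" "\<And>s u y. s \<in> {0..T} \<Longrightarrow> u \<ge> 0 \<Longrightarrow> \<bar>u - s\<bar> < d \<Longrightarrow> dist y (x u) < d
      \<Longrightarrow> \<psi> s * h y < path_sup \<psi> h x + e"
    using path_sup_bound_uniform[OF x e(1)] by blast
  obtain l where l: "\<And>n. time_change (l n)"
    "eventually (\<lambda>n. \<forall>t\<in>{0..T + 1}. \<bar>l n t - t\<bar> < d \<and> dist (xs n t) (x (l n t)) < d) sequentially"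
    using skorokhod_convE[OF conv _ d(1), of "T + 1"] T_nonneg by auto
  from l(2) show ?thesis
  proof eventually_elim
    case (elim n)
    have "path_sup \<psi> h (xs n) \<le> path_sup \<psi> h x + e"
    proof (rule path_sup_least)
      fix s :: real assume s: "s \<ge> 0"
      show "\<psi> s * h (xs n s) \<le> path_sup \<psi> h x + e"
      proof (cases "s \<le> T")
        case True
        have "l n s \<ge> 0" using l(1)[of n] s unfolding time_change_def by auto
        then show ?thesis using d(2)[of s "l n s" "xs n s"] elim s True by auto
      next
        case False
        then show ?thesis using \<psi>_vanishes[of s] path_sup_nonneg[of x] e by simp
      qed
    qed
    then show ?case using e(2) by linarith
  qed
qed

lemma path_sup_eventually_greater:
  assumes conv: "skorokhod_conv xs x" and a: "a < path_sup \<psi> h x"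
  shows "eventually (\<lambda>n. a < path_sup \<psi> h (xs n)) sequentially"
proof -
  obtain u where u: "u \<ge> 0" "a < \<psi> u * h (x u)"
    using a less_cSUP_iff[OF _ bdd_above_weights] unfolding path_sup_def by auto
  obtain \<rho> where \<rho>: "\<rho> > 0"
    "\<And>s y. \<bar>s - u\<bar> < \<rho> \<Longrightarrow> dist y (x u) < \<rho> \<Longrightarrow> \<bar>\<psi> s * h y - \<psi> u * h (x u)\<bar> < \<psi> u * h (x u) - a"
    using weight_near[of "\<psi> u * h (x u) - a"] u(2) by auto
  obtain l where l: "\<And>n. time_change (l n)" "eventually (\<lambda>n. \<forall>t\<in>{0..u + 1}.
      \<bar>l n t - t\<bar> < min \<rho> 1 \<and> dist (xs n t) (x (l n t)) < min \<rho> 1) sequentially"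
    using skorokhod_convE[OF conv, of "u + 1" "min \<rho> 1"] u(1) \<rho>(1) by auto
  from l(2) show ?thesis
  proof eventually_elim
    case (elim n)
    obtain s where s: "s \<ge> 0" "l n s = u"
      using l(1)[of n] u(1) unfolding time_change_def by (metis atLeast_iff imageE)
    \<comment> \<open>closeness on [0, u + 1] keeps the preimage of u under the time change in [0, u + 1]\<close>
    have "s \<le> u + 1"
    proof (rule ccontr)
      assume "\<not> s \<le> u + 1"
      then have "l n (u + 1) < l n s"
        using l(1)[of n] u(1) unfolding time_change_def by (auto intro: strict_mono_onD)
      moreover have "\<bar>l n (u + 1) - (u + 1)\<bar> < 1" using elim u(1) by auto
      ultimately show False using s(2) by auto
    qed
    then have "\<bar>l n s - s\<bar> < \<rho>" "dist (xs n s) (x (l n s)) < \<rho>" using elim s(1) by auto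
    then have "\<bar>s - u\<bar> < \<rho>" "dist (xs n s) (x u) < \<rho>" by (simp_all add: s(2) abs_minus_commute)
    then have "a < \<psi> s * h (xs n s)" using \<rho>(2) by fastforce
    also have "\<dots> \<le> path_sup \<psi> h (xs n)" by (rule path_sup_upper[OF s(1)])
    finally show ?case .
  qed
qed

lemma skorokhod_continuous_path_sup: "skorokhod_continuous (path_sup \<psi> h)"
  unfolding skorokhod_continuous_def
  by (blast intro: order_tendstoI path_sup_eventually_less path_sup_eventually_greater)

lemma path_sup_stopped:
  assumes rc: "\<forall>s\<ge>0. continuous (at_right s) x" and contf: "continuous_on UNIV f"
    and anti: "antimono \<psi>" and level: "\<And>y. ennreal r \<le> f y \<Longrightarrow> h y = 1"
  shows "path_sup \<psi> h (stopped f r x) = path_sup \<psi> h x"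
proof (cases "hit_time f r x = \<infinity>")
  case True
  then show ?thesis by (simp add: stopped_never_hit)
next
  case False
  then have fin: "hit_time f r x < \<infinity>"
    using top.not_eq_extremum unfolding infinity_ennreal_def by blast
  define \<sigma> where "\<sigma> = enn2real (hit_time f r x)"
  have \<sigma>: "\<sigma> \<ge> 0" "hit_time f r x = ennreal \<sigma>"
    unfolding \<sigma>_def using fin by (simp_all add: infinity_ennreal_def)
  have hit: "h (x \<sigma>) = 1" using level hit_time_attained[OF rc contf fin] by (simp add: \<sigma>_def)
  have st: "stopped f r x s = x (min s \<sigma>)" for s using stopped_eq_min[OF \<sigma>(2,1)] .
  show ?thesis
  proof (rule antisym; rule path_sup_least)
    fix s :: real assume s: "s \<ge> 0"
    show "\<psi> s * h (stopped f r x s) \<le> path_sup \<psi> h x"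
    proof (cases "\<sigma> < s")
      case True
      have "\<psi> s * h (x \<sigma>) \<le> \<psi> \<sigma> * h (x \<sigma>)"
        using antimonoD[OF anti, of \<sigma> s] True h_bounds by (simp add: mult_right_mono)
      then show ?thesis using path_sup_upper[OF \<sigma>(1), of x] True st by simp
    next
      case False
      then show ?thesis using path_sup_upper[OF s, of x] st by simp
    qed
  next
    fix s :: real assume s: "s \<ge> 0"
    show "\<psi> s * h (x s) \<le> path_sup \<psi> h (stopped f r x)"
    proof (cases "\<sigma> < s")
      case True
      have "\<psi> s * h (x s) \<le> \<psi> s" using \<psi>_bounds h_bounds by (simp add: mult_left_le)
      also have "\<dots> \<le> \<psi> \<sigma> * h (stopped f r x \<sigma>)"
        using antimonoD[OF anti, of \<sigma> s] True st hit by simp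
      also have "\<dots> \<le> path_sup \<psi> h (stopped f r x)" by (rule path_sup_upper[OF \<sigma>(1)])
      finally show ?thesis .
    next
      case False
      then show ?thesis using path_sup_upper[OF s, of "stopped f r x"] st by simp
    qed
  qed
qed

lemma path_sup_eq_SUP_Rats:
  assumes rc: "\<forall>s\<ge>0. continuous (at_right s) x"
  shows "path_sup \<psi> h x = (SUP q\<in>\<rat> \<inter> {0..}. \<psi> q * h (x q))"
proof (rule antisym)
  show "path_sup \<psi> h x \<le> (SUP q\<in>\<rat> \<inter> {0..}. \<psi> q * h (x q))"
  proof (rule path_sup_least)
    fix s :: real assume s: "s \<ge> 0"
    have "isCont \<psi> s" "isCont h (x s)"
      using continuous_\<psi> continuous_h by (simp_all add: continuous_on_eq_continuous_at)
    moreover have "(x \<longlongrightarrow> x s) (at_right s)" using rc s unfolding continuous_within by auto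
    ultimately have lim: "((\<lambda>q. \<psi> q * h (x q)) \<longlongrightarrow> \<psi> s * h (x s)) (at_right s)"
      by (intro tendsto_mult isCont_tendsto_compose[of _ h] isCont_tendsto_compose[of _ \<psi>]
          tendsto_ident_at)
    show "\<psi> s * h (x s) \<le> (SUP q\<in>\<rat> \<inter> {0..}. \<psi> q * h (x q))"
    proof (rule field_le_epsilon)
      fix e :: real assume "e > 0"
      with lim have "eventually (\<lambda>q. dist (\<psi> q * h (x q)) (\<psi> s * h (x s)) < e) (at_right s)"
        by (rule tendstoD)
      then obtain b where b: "b > s"
        "\<And>q. s < q \<Longrightarrow> q < b \<Longrightarrow> dist (\<psi> q * h (x q)) (\<psi> s * h (x s)) < e"
        unfolding eventually_at_right_field by auto
      obtain q where q: "q \<in> \<rat>" "s < q" "q < b" using Rats_dense_in_real[OF b(1)] by blast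
      have "\<psi> q * h (x q) \<le> (SUP q\<in>\<rat> \<inter> {0..}. \<psi> q * h (x q))"
        by (rule cSUP_upper[OF _ bdd_above_weights]) (use q s in auto)
      then show "\<psi> s * h (x s) \<le> (SUP q\<in>\<rat> \<inter> {0..}. \<psi> q * h (x q)) + e"
        using b(2)[OF q(2,3)] by (simp add: dist_real_def abs_less_iff)
    qed
  qed
  show "(SUP q\<in>\<rat> \<inter> {0..}. \<psi> q * h (x q)) \<le> path_sup \<psi> h x"
    unfolding path_sup_def
    by (rule cSUP_subset_mono[OF _ bdd_above_weights]) (use Rats_0 in blast)+
qed

lemma path_sup_measurable:
  assumes meas: "\<And>t. (\<lambda>\<omega>. Z \<omega> t) \<in> measurable M borel"
    and rc: "\<And>\<omega>. \<omega> \<in> space M \<Longrightarrow> \<forall>s\<ge>0. continuous (at_right s) (Z \<omega>)"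
  shows "(\<lambda>\<omega>. path_sup \<psi> h (Z \<omega>)) \<in> borel_measurable M"
proof -
  have "h \<in> borel_measurable borel" using continuous_h by (rule borel_measurable_continuous_onI)
  then have "(\<lambda>\<omega>. h (Z \<omega> q)) \<in> borel_measurable M" for q
    using measurable_compose[OF meas] by blast
  then have "(\<lambda>\<omega>. \<psi> q * h (Z \<omega> q)) \<in> borel_measurable M" for q
    by (rule borel_measurable_times[OF borel_measurable_const])
  then have "(\<lambda>\<omega>. SUP q\<in>\<rat> \<inter> {0..}. \<psi> q * h (Z \<omega> q)) \<in> borel_measurable M"
    using countable_rat by (intro borel_measurable_cSUP bdd_above_weights) auto
  then show ?thesis
    by (rule measurable_cong[THEN iffD1, rotated]) (simp add: path_sup_eq_SUP_Rats[OF rc])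
qed

end

definition capped :: "('e \<Rightarrow> ennreal) \<Rightarrow> real \<Rightarrow> 'e \<Rightarrow> real" where
  "capped f r y = enn2real (min (f y) (ennreal r))"

definition ramp_down :: "real \<Rightarrow> real \<Rightarrow> real \<Rightarrow> real" where
  "ramp_down t e s = min 1 (max 0 (1 - (s - t) / e))"

definition ramp_up :: "('e \<Rightarrow> ennreal) \<Rightarrow> real \<Rightarrow> real \<Rightarrow> 'e \<Rightarrow> real" where
  "ramp_up f r e y = min 1 (max 0 ((capped f r y - (r - e)) / e))"

lemma ennreal_capped: "r \<ge> 0 \<Longrightarrow> ennreal (capped f r y) = min (f y) (ennreal r)"
  unfolding capped_def
  by (metis ennreal_enn2real ennreal_less_top min.absorb_iff2 min.bounded_iff min_def order.strict_trans1)

lemma continuous_on_capped: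
  fixes f :: "'e::topological_space \<Rightarrow> ennreal"
  assumes "continuous_on UNIV f" "r \<ge> 0"
  shows "continuous_on UNIV (capped f r)"
  unfolding continuous_on_def
proof
  fix y0
  have "((\<lambda>y. min (f y) (ennreal r)) \<longlongrightarrow> ennreal (capped f r y0)) (at y0 within UNIV)"
    unfolding ennreal_capped[OF assms(2)] using assms(1)
    by (intro tendsto_min tendsto_const) (simp add: continuous_on_def)
  then have "((\<lambda>y. enn2real (min (f y) (ennreal r))) \<longlongrightarrow> capped f r y0) (at y0 within UNIV)"
    by (rule tendsto_enn2real) (simp add: capped_def)
  moreover have "capped f r = (\<lambda>y. enn2real (min (f y) (ennreal r)))"
    by (simp add: fun_eq_iff capped_def)
  ultimately show "(capped f r \<longlongrightarrow> capped f r y0) (at y0 within UNIV)" by simp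
qed

lemma capped_le: "r \<ge> 0 \<Longrightarrow> capped f r y \<le> r"
  unfolding capped_def by (simp add: enn2real_leI)

lemma capped_ge_iff:
  assumes "r \<ge> 0"
  shows "r \<le> capped f r y \<longleftrightarrow> ennreal r \<le> f y"
proof -
  have "r \<le> capped f r y \<longleftrightarrow> ennreal r \<le> ennreal (capped f r y)"
    by (rule ennreal_le_iff[symmetric]) (simp add: capped_def)
  also have "\<dots> \<longleftrightarrow> ennreal r \<le> f y" unfolding ennreal_capped[OF assms] by simp
  finally show ?thesis .
qed

lemma antimono_ramp_down:
  assumes "e > 0"
  shows "antimono (ramp_down t e)"
proof (rule antimonoI)
  fix a b :: real assume "a \<le> b"
  then have "1 - (b - t) / e \<le> 1 - (a - t) / e" using assms by (simp add: divide_right_mono)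
  then show "ramp_down t e b \<le> ramp_down t e a" unfolding ramp_down_def min_def max_def by auto
qed

lemma ramp_down_pos_iff: "e > 0 \<Longrightarrow> 0 < ramp_down t e s \<longleftrightarrow> s < t + e"
  unfolding ramp_down_def by (auto simp: less_max_iff_disj zero_less_divide_iff)

lemma ramp_down_eq_one: "e > 0 \<Longrightarrow> s \<le> t \<Longrightarrow> ramp_down t e s = 1"
  unfolding ramp_down_def by (auto simp: field_simps)

lemma ramp_up_pos_iff: "e > 0 \<Longrightarrow> 0 < ramp_up f r e y \<longleftrightarrow> r - e < capped f r y"
  unfolding ramp_up_def by (auto simp: less_max_iff_disj zero_less_divide_iff)

lemma ramp_up_eq_one: "e > 0 \<Longrightarrow> r \<ge> 0 \<Longrightarrow> ennreal r \<le> f y \<Longrightarrow> ramp_up f r e y = 1"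
  using capped_ge_iff[of r f y] capped_le[of r f y] unfolding ramp_up_def by auto

lemma weight_pair_ramps:
  fixes f :: "'e::metric_space \<Rightarrow> ennreal"
  assumes "continuous_on UNIV f" "r \<ge> 0" "t \<ge> 0" "e > 0"
  shows "weight_pair (ramp_down t e) (ramp_up f r e) (t + e)"
proof
  show "continuous_on UNIV (ramp_down t e)" unfolding ramp_down_def[abs_def]
    by (intro continuous_intros) (use assms in auto)
  show "continuous_on UNIV (ramp_up f r e)" unfolding ramp_up_def[abs_def]
    using continuous_on_capped[OF assms(1,2)] assms(4) by (intro continuous_intros) auto
  show "ramp_down t e s = 0" if "t + e \<le> s" for s
    using that assms(4) unfolding ramp_down_def by (auto simp: field_simps)
qed (use assms in \<open>auto simp: ramp_down_def ramp_up_def\<close>)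

lemma approximate_level_attained:
  fixes p :: "real \<Rightarrow> real"
  assumes p: "continuous_on {0..} p" and "t \<ge> 0"
    and approx: "\<And>k. \<exists>s\<ge>0. s < t + 1 / Suc k \<and> c - 1 / Suc k < p s"
  shows "\<exists>s\<in>{0..t}. c \<le> p s"
proof -
  obtain s where s: "\<And>k. s k \<ge> 0" "\<And>k. s k < t + 1 / Suc k" "\<And>k. c - 1 / Suc k < p (s k)"
    using approx by metis
  have sk: "\<forall>k. s k \<in> {0..t + 1}"
  proof
    fix k
    have "1 / real (Suc k) \<le> 1" by simp
    then have "s k \<le> t + 1" using s(2)[of k] by linarith
    then show "s k \<in> {0..t + 1}" using s(1)[of k] by simp
  qed
  have "seq_compact {0..t + 1}" by (rule compact_imp_seq_compact[OF compact_Icc])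
  from seq_compactE[OF this sk]
  obtain l \<sigma> where l: "l \<in> {0..t + 1}" "strict_mono \<sigma>" "(s \<circ> \<sigma>) \<longlonglongrightarrow> l" .
  have "(\<lambda>k. 1 / real (Suc k)) \<longlonglongrightarrow> 0"
    using LIMSEQ_inverse_real_of_nat by (simp add: inverse_eq_divide)
  from LIMSEQ_subseq_LIMSEQ[OF this l(2)]
  have inv: "(\<lambda>k. 1 / real (Suc (\<sigma> k))) \<longlonglongrightarrow> 0" by (simp add: o_def)
  have "l \<le> t"
  proof (rule tendsto_le[OF trivial_limit_sequentially _ l(3)])
    show "(\<lambda>k. t + 1 / real (Suc (\<sigma> k))) \<longlonglongrightarrow> t"
      using tendsto_add[OF tendsto_const inv, of t] by simp
    show "\<forall>\<^sub>F k in sequentially. (s \<circ> \<sigma>) k \<le> t + 1 / real (Suc (\<sigma> k))"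
      using s(2) by (intro always_eventually allI) (simp add: less_imp_le)
  qed
  from continuous_on_tendsto_compose[OF p l(3)[unfolded o_def]]
  have lim: "(\<lambda>k. p (s (\<sigma> k))) \<longlonglongrightarrow> p l"
    using l(1) s(1) by (simp add: always_eventually)
  have "c \<le> p l"
  proof (rule tendsto_le[OF trivial_limit_sequentially lim])
    show "(\<lambda>k. c - 1 / real (Suc (\<sigma> k))) \<longlonglongrightarrow> c"
      using tendsto_diff[OF tendsto_const inv, of c] by simp
    show "\<forall>\<^sub>F k in sequentially. c - 1 / real (Suc (\<sigma> k)) \<le> p (s (\<sigma> k))"
      by (intro always_eventually allI less_imp_le s(3))
  qed
  then show ?thesis using l(1) \<open>l \<le> t\<close> by auto
qed

definition soft_hit :: "('e \<Rightarrow> ennreal) \<Rightarrow> real \<Rightarrow> real \<Rightarrow> real \<Rightarrow> (real \<Rightarrow> 'e) \<Rightarrow> real" where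
  "soft_hit f r t e = path_sup (ramp_down t e) (ramp_up f r e)"

context
  fixes f :: "'e::metric_space \<Rightarrow> ennreal" and r t :: real
  assumes contf: "continuous_on UNIV f" and r_nonneg: "r \<ge> 0" and t_nonneg: "t \<ge> 0"
begin

lemma soft_hit_bounds: "e > 0 \<Longrightarrow> 0 \<le> soft_hit f r t e x \<and> soft_hit f r t e x \<le> 1"
  using weight_pair.path_sup_nonneg weight_pair.path_sup_le_one
    weight_pair_ramps[OF contf r_nonneg t_nonneg] unfolding soft_hit_def by blast

lemma skorokhod_continuous_soft_hit: "e > 0 \<Longrightarrow> skorokhod_continuous (soft_hit f r t e)"
  unfolding soft_hit_def
  by (rule weight_pair.skorokhod_continuous_path_sup[OF weight_pair_ramps[OF contf r_nonneg t_nonneg]])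

lemma soft_hit_measurable:
  assumes "e > 0" "\<And>s. (\<lambda>\<omega>. Z \<omega> s) \<in> measurable M borel"
    "\<And>\<omega>. \<omega> \<in> space M \<Longrightarrow> \<forall>s\<ge>0. continuous (at_right s) (Z \<omega>)"
  shows "(\<lambda>\<omega>. soft_hit f r t e (Z \<omega>)) \<in> borel_measurable M"
  unfolding soft_hit_def
  by (rule weight_pair.path_sup_measurable[OF weight_pair_ramps[OF contf r_nonneg t_nonneg assms(1)]
        assms(2,3)])

lemma soft_hit_stopped:
  assumes "e > 0" "\<forall>s\<ge>0. continuous (at_right s) x"
  shows "soft_hit f r t e (stopped f r x) = soft_hit f r t e x"
  unfolding soft_hit_def
  using weight_pair.path_sup_stopped[OF weight_pair_ramps[OF contf r_nonneg t_nonneg assms(1)]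
      assms(2) contf antimono_ramp_down[OF assms(1)]] ramp_up_eq_one[OF assms(1) r_nonneg]
  by blast

lemma soft_hit_eq_one:
  assumes "e > 0" "\<forall>s\<ge>0. continuous (at_right s) x" "hit_time f r x \<le> ennreal t"
  shows "soft_hit f r t e x = 1"
proof -
  interpret weight_pair "ramp_down t e" "ramp_up f r e" "t + e"
    by (rule weight_pair_ramps[OF contf r_nonneg t_nonneg assms(1)])
  obtain s where s: "s \<in> {0..t}" "ennreal r \<le> f (x s)"
    using hit_time_le_iff[OF assms(2) contf t_nonneg] assms(3) by blast
  then have "ramp_down t e s * ramp_up f r e (x s) = 1"
    using ramp_down_eq_one ramp_up_eq_one assms(1) r_nonneg by simp
  then have "1 \<le> path_sup (ramp_down t e) (ramp_up f r e) x" using path_sup_upper[of s x] s(1) by simp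
  then show ?thesis using path_sup_le_one unfolding soft_hit_def by (simp add: order_antisym)
qed

lemma soft_hit_pos_iff:
  assumes "e > 0"
  shows "0 < soft_hit f r t e x \<longleftrightarrow> (\<exists>s\<ge>0. s < t + e \<and> r - e < capped f r (x s))"
  unfolding soft_hit_def weight_pair.path_sup_pos_iff[OF weight_pair_ramps[OF contf r_nonneg t_nonneg assms]]
    ramp_down_pos_iff[OF assms] ramp_up_pos_iff[OF assms] ..

lemma soft_hit_pos_mono:
  assumes "0 < e" "e \<le> e'" "0 < soft_hit f r t e x"
  shows "0 < soft_hit f r t e' x"
proof -
  obtain s where s: "s \<ge> 0" "s < t + e" "r - e < capped f r (x s)"
    using assms(3) unfolding soft_hit_pos_iff[OF assms(1)] by blast
  have "0 < e'" using assms(1,2) by linarith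
  moreover have "s < t + e'" "r - e' < capped f r (x s)" using s assms(2) by linarith+
  ultimately show ?thesis unfolding soft_hit_pos_iff[OF \<open>0 < e'\<close>] using s(1) by blast
qed

lemma all_soft_hit_pos_iff:
  assumes y: "continuous_on {0..} y"
  shows "(\<forall>k. 0 < soft_hit f r t (1 / Suc k) y) \<longleftrightarrow> hit_time f r y \<le> ennreal t"
proof -
  have rc: "\<forall>s\<ge>0. continuous (at_right s) y"
    using continuous_on_imp_continuous_at_right[OF y] by blast
  have cont: "continuous_on {0..} (\<lambda>u. capped f r (y u))"
    by (rule continuous_on_compose2[OF continuous_on_capped[OF contf r_nonneg] y]) simp
  show ?thesis
  proof
    assume "\<forall>k. 0 < soft_hit f r t (1 / Suc k) y"
    then have "\<And>k. \<exists>s\<ge>0. s < t + 1 / Suc k \<and> r - 1 / Suc k < capped f r (y s)"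
      using soft_hit_pos_iff by simp
    then obtain s where "s \<in> {0..t}" "r \<le> capped f r (y s)"
      using approximate_level_attained[OF cont t_nonneg] by blast
    then show "hit_time f r y \<le> ennreal t"
      unfolding hit_time_le_iff[OF rc contf t_nonneg] capped_ge_iff[OF r_nonneg] by blast
  next
    assume "hit_time f r y \<le> ennreal t"
    then obtain s where s: "s \<in> {0..t}" "ennreal r \<le> f (y s)"
      unfolding hit_time_le_iff[OF rc contf t_nonneg] by blast
    then have "r \<le> capped f r (y s)" by (simp add: capped_ge_iff[OF r_nonneg])
    then have "capped f r (y s) = r" using capped_le[OF r_nonneg] by (rule antisym[rotated])
    show "\<forall>k. 0 < soft_hit f r t (1 / Suc k) y"
    proof
      fix k :: nat
      have "0 < 1 / real (Suc k)" by simp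
      then have "s < t + 1 / Suc k" "r - 1 / Suc k < capped f r (y s)"
        using s(1) \<open>capped f r (y s) = r\<close> unfolding atLeastAtMost_iff by linarith+
      then show "0 < soft_hit f r t (1 / Suc k) y" using s(1) soft_hit_pos_iff by auto
    qed
  qed
qed

end

(* A need not be measurable (its measure is then 0): the hitting events of the approximating
   processes are not known to be. *)
lemma measure_le_integral:
  assumes "finite_measure M" "integrable M g" "\<And>\<omega>. \<omega> \<in> space M \<Longrightarrow> 0 \<le> g \<omega>"
    "\<And>\<omega>. \<omega> \<in> A \<Longrightarrow> 1 \<le> g \<omega>"
  shows "measure M A \<le> (\<integral>\<omega>. g \<omega> \<partial>M)"
proof (cases "A \<in> sets M")
  case False
  then show ?thesis using assms(3) by (simp add: measure_notin_sets)
next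
  case True
  interpret finite_measure M by fact
  have "measure M A = (\<integral>\<omega>. indicator A \<omega> \<partial>M)"
    using sets.sets_into_space[OF True] by (simp add: Int_absorb2)
  also have "\<dots> \<le> (\<integral>\<omega>. g \<omega> \<partial>M)"
  proof (rule integral_mono[OF _ assms(2)])
    show "integrable M (indicator A :: _ \<Rightarrow> real)"
      using True by (simp add: integrable_indicator_iff Int_absorb2 sets.sets_into_space
          emeasure_finite less_top[symmetric])
  qed (use assms(3,4) in \<open>auto simp: indicator_def\<close>)
  finally show ?thesis .
qed

lemma integral_le_measure_pos:
  assumes "finite_measure M" "g \<in> borel_measurable M" "\<And>\<omega>. \<omega> \<in> space M \<Longrightarrow> 0 \<le> g \<omega> \<and> g \<omega> \<le> 1"
  shows "(\<integral>\<omega>. g \<omega> \<partial>M) \<le> measure M {\<omega>\<in>space M. 0 < g \<omega>}"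
proof -
  interpret finite_measure M by fact
  have B: "{\<omega>\<in>space M. 0 < g \<omega>} \<in> sets M" using assms(2) by measurable
  have "(\<integral>\<omega>. g \<omega> \<partial>M) \<le> (\<integral>\<omega>. indicator {\<omega>\<in>space M. 0 < g \<omega>} \<omega> \<partial>M)"
    using B assms(2,3) by (intro integral_mono integrable_const_bound[where B = 1]) (auto simp: indicator_def)
  also have "\<dots> = measure M {\<omega>\<in>space M. 0 < g \<omega>}" by (simp add: Int_absorb2)
  finally show ?thesis .
qed

lemma limsup_measure_hit_time_le_integral:
  fixes X :: "nat \<Rightarrow> 'a \<Rightarrow> real \<Rightarrow> 'e::metric_space" and f :: "'e \<Rightarrow> ennreal"
  assumes probM: "\<And>n. prob_space (M n)" and probN: "prob_space N"
    and measX: "\<And>n s. (\<lambda>\<omega>. X n \<omega> s) \<in> measurable (M n) borel"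
    and measY: "\<And>s. (\<lambda>\<omega>. Y \<omega> s) \<in> measurable N borel"
    and rcX: "\<And>n \<omega>. \<omega> \<in> space (M n) \<Longrightarrow> \<forall>s\<ge>0. continuous (at_right s) (X n \<omega>)"
    and rcY: "\<And>\<omega>. \<omega> \<in> space N \<Longrightarrow> \<forall>s\<ge>0. continuous (at_right s) (Y \<omega>)"
    and contf: "continuous_on UNIV f"
    and conv: "skorokhod_conv_distr M (\<lambda>n \<omega>. stopped f r (X n \<omega>)) N (\<lambda>\<omega>. stopped f r (Y \<omega>))"
    and r: "r \<ge> 0" and t: "t \<ge> 0" and e: "e > 0"
  shows "limsup (\<lambda>n. ereal (measure (M n) {\<omega>\<in>space (M n). hit_time f r (X n \<omega>) \<le> ennreal t}))
      \<le> ereal (\<integral>\<omega>. soft_hit f r t e (Y \<omega>) \<partial>N)"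
proof -
  let ?G = "soft_hit f r t e"
  have G: "0 \<le> ?G x \<and> ?G x \<le> 1" for x by (rule soft_hit_bounds[OF contf r t e])
  have "bounded (range ?G)" unfolding bounded_iff using G by (intro exI[of _ 1]) auto
  with conv skorokhod_continuous_soft_hit[OF contf r t e]
  have "(\<lambda>n. \<integral>\<omega>. ?G (stopped f r (X n \<omega>)) \<partial>M n) \<longlonglongrightarrow> (\<integral>\<omega>. ?G (stopped f r (Y \<omega>)) \<partial>N)"
    unfolding skorokhod_conv_distr_def by blast
  moreover have "(\<integral>\<omega>. ?G (stopped f r (X n \<omega>)) \<partial>M n) = (\<integral>\<omega>. ?G (X n \<omega>) \<partial>M n)" for n
    by (rule Bochner_Integration.integral_cong) (simp_all add: soft_hit_stopped[OF contf r t e rcX])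
  moreover have "(\<integral>\<omega>. ?G (stopped f r (Y \<omega>)) \<partial>N) = (\<integral>\<omega>. ?G (Y \<omega>) \<partial>N)"
    by (rule Bochner_Integration.integral_cong) (simp_all add: soft_hit_stopped[OF contf r t e rcY])
  ultimately have lim: "(\<lambda>n. \<integral>\<omega>. ?G (X n \<omega>) \<partial>M n) \<longlonglongrightarrow> (\<integral>\<omega>. ?G (Y \<omega>) \<partial>N)" by simp
  have "measure (M n) {\<omega>\<in>space (M n). hit_time f r (X n \<omega>) \<le> ennreal t} \<le> (\<integral>\<omega>. ?G (X n \<omega>) \<partial>M n)"
    for n
  proof (rule measure_le_integral)
    show "finite_measure (M n)" using probM by (rule prob_space.finite_measure)
    then show "integrable (M n) (\<lambda>\<omega>. ?G (X n \<omega>))"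
      using soft_hit_measurable[OF contf r t e measX rcX] G
      by (intro finite_measure.integrable_const_bound[where B = 1]) auto
  qed (use G soft_hit_eq_one[OF contf r t e rcX] in auto)
  then have "limsup (\<lambda>n. ereal (measure (M n) {\<omega>\<in>space (M n). hit_time f r (X n \<omega>) \<le> ennreal t}))
      \<le> limsup (\<lambda>n. ereal (\<integral>\<omega>. ?G (X n \<omega>) \<partial>M n))"
    by (intro Limsup_mono always_eventually) simp
  also have "\<dots> = ereal (\<integral>\<omega>. ?G (Y \<omega>) \<partial>N)"
    using lim by (intro lim_imp_Limsup) (auto intro: tendsto_ereal)
  finally show ?thesis .
qed

lemma hit_time_le_eq_INT_soft_hit:
  fixes f :: "'e::metric_space \<Rightarrow> ennreal"
  assumes "continuous_on UNIV f" "r \<ge> 0" "t \<ge> 0" "\<And>\<omega>. \<omega> \<in> space N \<Longrightarrow> continuous_on {0..} (Y \<omega>)"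
  shows "{\<omega>\<in>space N. hit_time f r (Y \<omega>) \<le> ennreal t}
    = (\<Inter>k. {\<omega>\<in>space N. 0 < soft_hit f r t (1 / Suc k) (Y \<omega>)})"
proof (rule set_eqI)
  fix \<omega>
  show "\<omega> \<in> {\<omega>\<in>space N. hit_time f r (Y \<omega>) \<le> ennreal t}
    \<longleftrightarrow> \<omega> \<in> (\<Inter>k. {\<omega>\<in>space N. 0 < soft_hit f r t (1 / Suc k) (Y \<omega>)})"
  proof (cases "\<omega> \<in> space N")
    case True
    then show ?thesis using all_soft_hit_pos_iff[OF assms(1-3) assms(4)[OF True]] by simp
  qed simp
qed

lemma sets_soft_hit_pos:
  fixes f :: "'e::metric_space \<Rightarrow> ennreal"
  assumes "continuous_on UNIV f" "r \<ge> 0" "t \<ge> 0" "e > 0"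
    "\<And>s. (\<lambda>\<omega>. Y \<omega> s) \<in> measurable N borel" "\<And>\<omega>. \<omega> \<in> space N \<Longrightarrow> continuous_on {0..} (Y \<omega>)"
  shows "{\<omega>\<in>space N. 0 < soft_hit f r t e (Y \<omega>)} \<in> sets N"
proof -
  have "\<forall>s\<ge>0. continuous (at_right s) (Y \<omega>)" if "\<omega> \<in> space N" for \<omega>
    using continuous_on_imp_continuous_at_right[OF assms(6)[OF that]] by blast
  then have "(\<lambda>\<omega>. soft_hit f r t e (Y \<omega>)) \<in> borel_measurable N"
    by (rule soft_hit_measurable[OF assms(1-5)])
  then show ?thesis by measurable
qed

lemma sets_hit_time_le:
  fixes f :: "'e::metric_space \<Rightarrow> ennreal"
  assumes "continuous_on UNIV f" "r \<ge> 0" "t \<ge> 0"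
    "\<And>s. (\<lambda>\<omega>. Y \<omega> s) \<in> measurable N borel" "\<And>\<omega>. \<omega> \<in> space N \<Longrightarrow> continuous_on {0..} (Y \<omega>)"
  shows "{\<omega>\<in>space N. hit_time f r (Y \<omega>) \<le> ennreal t} \<in> sets N"
proof -
  have "{\<omega>\<in>space N. 0 < soft_hit f r t (1 / Suc k) (Y \<omega>)} \<in> sets N" for k
    by (rule sets_soft_hit_pos[OF assms(1-3) _ assms(4,5)]) simp
  then have "(\<Inter>k. {\<omega>\<in>space N. 0 < soft_hit f r t (1 / Suc k) (Y \<omega>)}) \<in> sets N" by blast
  also have "(\<Inter>k. {\<omega>\<in>space N. 0 < soft_hit f r t (1 / Suc k) (Y \<omega>)})
      = {\<omega>\<in>space N. hit_time f r (Y \<omega>) \<le> ennreal t}"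
    by (rule hit_time_le_eq_INT_soft_hit[OF assms(1-3,5), symmetric])
  finally show ?thesis .
qed

lemma limsup_measure_hit_time_le:
  fixes X :: "nat \<Rightarrow> 'a \<Rightarrow> real \<Rightarrow> 'e::metric_space" and f :: "'e \<Rightarrow> ennreal"
  assumes probM: "\<And>n. prob_space (M n)" and probN: "prob_space N"
    and measX: "\<And>n s. (\<lambda>\<omega>. X n \<omega> s) \<in> measurable (M n) borel"
    and measY: "\<And>s. (\<lambda>\<omega>. Y \<omega> s) \<in> measurable N borel"
    and rcX: "\<And>n \<omega>. \<omega> \<in> space (M n) \<Longrightarrow> \<forall>s\<ge>0. continuous (at_right s) (X n \<omega>)"
    and contY: "\<And>\<omega>. \<omega> \<in> space N \<Longrightarrow> continuous_on {0..} (Y \<omega>)"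
    and contf: "continuous_on UNIV f"
    and conv: "skorokhod_conv_distr M (\<lambda>n \<omega>. stopped f r (X n \<omega>)) N (\<lambda>\<omega>. stopped f r (Y \<omega>))"
    and r: "r \<ge> 0" and t: "t \<ge> 0"
  shows "limsup (\<lambda>n. ereal (measure (M n) {\<omega>\<in>space (M n). hit_time f r (X n \<omega>) \<le> ennreal t}))
      \<le> ereal (measure N {\<omega>\<in>space N. hit_time f r (Y \<omega>) \<le> ennreal t})"
proof -
  interpret N: prob_space N by (rule probN)
  have rcY: "\<forall>s\<ge>0. continuous (at_right s) (Y \<omega>)" if "\<omega> \<in> space N" for \<omega>
    using continuous_on_imp_continuous_at_right[OF contY[OF that]] by blast
  define B where "B k = {\<omega>\<in>space N. 0 < soft_hit f r t (1 / Suc k) (Y \<omega>)}" for k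
  have B: "B k \<in> sets N" for k unfolding B_def by (rule sets_soft_hit_pos[OF contf r t _ measY contY]) simp
  have "decseq B"
  proof (rule decseq_SucI)
    fix k
    have "0 < 1 / real (Suc (Suc k))" "1 / real (Suc (Suc k)) \<le> 1 / real (Suc k)"
      by (simp_all add: frac_le)
    then show "B (Suc k) \<subseteq> B k" unfolding B_def using soft_hit_pos_mono[OF contf r t] by blast
  qed
  with B have "(\<lambda>k. measure N (B k)) \<longlonglongrightarrow> measure N (\<Inter>k. B k)"
    by (intro N.finite_Lim_measure_decseq) auto
  also have "(\<Inter>k. B k) = {\<omega>\<in>space N. hit_time f r (Y \<omega>) \<le> ennreal t}"
    unfolding B_def by (rule hit_time_le_eq_INT_soft_hit[OF contf r t contY, symmetric])
  finally have lim: "(\<lambda>k. measure N (B k)) \<longlonglongrightarrow> measure N {\<omega>\<in>space N. hit_time f r (Y \<omega>) \<le> ennreal t}" .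
  have "limsup (\<lambda>n. ereal (measure (M n) {\<omega>\<in>space (M n). hit_time f r (X n \<omega>) \<le> ennreal t}))
      \<le> ereal (measure N (B k))" for k
  proof -
    have e: "1 / real (Suc k) > 0" by simp
    note limsup_measure_hit_time_le_integral[OF probM probN measX measY rcX rcY contf conv r t e]
    also have "(\<integral>\<omega>. soft_hit f r t (1 / Suc k) (Y \<omega>) \<partial>N) \<le> measure N (B k)"
      unfolding B_def using soft_hit_measurable[OF contf r t e measY rcY] soft_hit_bounds[OF contf r t e]
      by (intro integral_le_measure_pos N.finite_measure) auto
    finally show ?thesis by simp
  qed
  then show ?thesis using LIMSEQ_le_const[OF lim[THEN tendsto_ereal]] by blast
qed

lemma antimono_on_tendsto_zero_at_top:
  fixes P :: "real \<Rightarrow> real"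
  assumes anti: "antimono_on {0..} P" and nonneg: "\<And>r. 0 \<le> P r"
    and lim: "(\<lambda>m. P (real m)) \<longlonglongrightarrow> 0"
  shows "(P \<longlongrightarrow> 0) at_top"
proof (rule order_tendstoI)
  fix a :: real assume "a < 0"
  then show "eventually (\<lambda>r. a < P r) at_top"
    using nonneg by (intro always_eventually allI) (rule less_le_trans)
next
  fix a :: real assume "0 < a"
  then obtain m where m: "P (real m) < a"
    using order_tendstoD(2)[OF lim] by (auto simp: eventually_sequentially)
  have "P r < a" if "real m \<le> r" for r
    using monotone_onD[OF anti _ _ that] m that by (simp add: le_less_trans)
  then show "eventually (\<lambda>r. P r < a) at_top" unfolding eventually_at_top_linorder by blast
qed

lemma measure_hit_time_le_tendsto_zero:
  assumes probN: "prob_space N"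
    and sets: "\<And>r. r \<ge> 0 \<Longrightarrow> {\<omega>\<in>space N. hit_time f r (Y \<omega>) \<le> ennreal t} \<in> sets N"
    and noexpl: "AE \<omega> in N. ((\<lambda>r. hit_time f r (Y \<omega>)) \<longlongrightarrow> \<infinity>) at_top"
  shows "((\<lambda>r. measure N {\<omega>\<in>space N. hit_time f r (Y \<omega>) \<le> ennreal t}) \<longlongrightarrow> 0) at_top"
proof -
  interpret N: prob_space N by (rule probN)
  define E where "E r = {\<omega>\<in>space N. hit_time f r (Y \<omega>) \<le> ennreal t}" for r
  have E_anti: "E r' \<subseteq> E r" if "r \<le> r'" for r r'
    unfolding E_def using order_trans[OF hit_time_mono[OF that]] by blast
  have E: "E (real m) \<in> sets N" for m unfolding E_def by (rule sets) simp
  have ae: "AE \<omega> in N. \<omega> \<notin> (\<Inter>m. E (real m))"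
    using noexpl
  proof eventually_elim
    case (elim \<omega>)
    have "((\<lambda>m. hit_time f (real m) (Y \<omega>)) \<longlongrightarrow> \<infinity>) sequentially"
      using elim filterlim_real_sequentially by (rule filterlim_compose)
    then have "eventually (\<lambda>m. ennreal t < hit_time f (real m) (Y \<omega>)) sequentially"
      by (rule order_tendstoD) (simp add: infinity_ennreal_def)
    then obtain m where "ennreal t < hit_time f (real m) (Y \<omega>)"
      by (auto simp: eventually_sequentially)
    then have "\<omega> \<notin> E (real m)" unfolding E_def by (simp add: not_le)
    then show ?case by blast
  qed
  have "(\<Inter>m. E (real m)) \<in> sets N" using E by blast
  moreover have "{\<omega>\<in>space N. \<not> \<omega> \<notin> (\<Inter>m. E (real m))} = (\<Inter>m. E (real m))" unfolding E_def by auto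
  ultimately have null: "emeasure N (\<Inter>m. E (real m)) = 0" using ae by (simp only: AE_iff_measurable)
  have "range (\<lambda>m. E (real m)) \<subseteq> sets N" "decseq (\<lambda>m. E (real m))"
    using E by (auto intro!: decseq_SucI E_anti)
  from N.finite_Lim_measure_decseq[OF this]
  have "(\<lambda>m. measure N (E (real m))) \<longlonglongrightarrow> measure N (\<Inter>m. E (real m))" .
  also have "measure N (\<Inter>m. E (real m)) = 0" using null by (simp add: measure_def)
  finally have "(\<lambda>m. measure N (E (real m))) \<longlonglongrightarrow> 0" .
  moreover have "antimono_on {0..} (\<lambda>r. measure N (E r))"
    using E_anti sets unfolding E_def by (intro monotone_onI N.finite_measure_mono) auto
  ultimately show ?thesis
    unfolding E_def by (rule antimono_on_tendsto_zero_at_top[rotated 2]) simp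
qed

theorem mainTheorem2:
  fixes M :: "nat \<Rightarrow> 'a measure" and X :: "nat \<Rightarrow> 'a \<Rightarrow> real \<Rightarrow> 'e::polish_space"
    and N :: "'b measure" and Y :: "'b \<Rightarrow> real \<Rightarrow> 'e"
    and f :: "'e \<Rightarrow> ennreal"
  assumes probM: "\<And>n. prob_space (M n)" and probN: "prob_space N"
    and measX: "\<And>n t. (\<lambda>\<omega>. X n \<omega> t) \<in> measurable (M n) borel"
    and measY: "\<And>t. (\<lambda>\<omega>. Y \<omega> t) \<in> measurable N borel"
    and cadX: "\<And>n \<omega>. \<omega> \<in> space (M n) \<Longrightarrow> cadlag (X n \<omega>)"
    and contY: "\<And>\<omega>. \<omega> \<in> space N \<Longrightarrow> continuous_on {0..} (Y \<omega>)"
    and contf: "continuous_on UNIV f"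
    and localconv: "\<And>r. r > 0 \<Longrightarrow>
        skorokhod_conv_distr M (\<lambda>n \<omega>. stopped f r (X n \<omega>)) N (\<lambda>\<omega>. stopped f r (Y \<omega>))"
    and noexpl: "AE \<omega> in N. ((\<lambda>r. hit_time f r (Y \<omega>)) \<longlongrightarrow> \<infinity>) at_top"
  shows "(\<forall>r>0. \<forall>t>0.
            limsup (\<lambda>n. ereal (measure (M n) {\<omega>\<in>space (M n). hit_time f r (X n \<omega>) \<le> ennreal t}))
              \<le> ereal (measure N {\<omega>\<in>space N. hit_time f r (Y \<omega>) \<le> ennreal t}))
       \<and> (\<forall>t>0. ((\<lambda>r. limsup (\<lambda>n. ereal (measure (M n)
                   {\<omega>\<in>space (M n). hit_time f r (X n \<omega>) \<le> ennreal t}))) \<longlongrightarrow> 0) at_top)"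
proof -
  let ?LS = "\<lambda>r t. limsup (\<lambda>n. ereal (measure (M n) {\<omega>\<in>space (M n). hit_time f r (X n \<omega>) \<le> ennreal t}))"
  let ?P = "\<lambda>r t. measure N {\<omega>\<in>space N. hit_time f r (Y \<omega>) \<le> ennreal t}"
  have rcX: "\<forall>s\<ge>0. continuous (at_right s) (X n \<omega>)" if "\<omega> \<in> space (M n)" for n \<omega>
    using cadX[OF that] unfolding cadlag_def by blast
  have bound: "?LS r t \<le> ereal (?P r t)" if "r > 0" "t > 0" for r t
    using limsup_measure_hit_time_le[OF probM probN measX measY rcX contY contf localconv[OF that(1)]] that
    by simp
  have "((\<lambda>r. ?LS r t) \<longlongrightarrow> 0) at_top" if "t > 0" for t
  proof (rule tendsto_sandwich[where h = "\<lambda>r. ereal (?P r t)", OF _ _ tendsto_const])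
    show "eventually (\<lambda>r. 0 \<le> ?LS r t) at_top" by (intro always_eventually allI le_Limsup) auto
    show "eventually (\<lambda>r. ?LS r t \<le> ereal (?P r t)) at_top"
      using eventually_gt_at_top[of 0] by (rule eventually_mono) (erule bound[OF _ that])
    have "((\<lambda>r. ?P r t) \<longlongrightarrow> 0) at_top"
      using sets_hit_time_le[OF contf _ _ measY contY] that
      by (intro measure_hit_time_le_tendsto_zero[OF probN _ noexpl]) auto
    then show "((\<lambda>r. ereal (?P r t)) \<longlongrightarrow> 0) at_top" by (simp add: tendsto_ereal zero_ereal_def)
  qed
  with bound show ?thesis by blast
qed

end
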